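(* Let $n\ge2$, $\xi\in\mathbb{S}^{n-1}$ and $f\in C^2_c(\mathbb{R}^n)$. Then $$\lim_{p\to n+}\Big(1-\frac np\Big)^{\frac pn}\|\xi\|^n_{\Pi^{*,n/p}_{p,n}f}=\frac1n\|\xi\|^n_{\Pi^*_nf},$$ i.e. $\lim_{p\to n+}\big[(1-\frac np)\int_0^\infty t^{-n^2/p}\|\Delta_{t\xi}f\|_{L^p}^n\frac{dt}{t}\big]^{p/n}=\frac1n\int_{\mathbb{R}^n}|\nabla f(x)\cdot\xi|^ndx$.
   Context: $\Delta_hf(x)=f(x+h)-f(x)$. $\|\xi\|^{sq}_{\Pi^{*,s}_{p,q}f}=\int_0^\infty t^{-sq}\|\Delta_{t\xi}f\|^q_{L^p}\frac{dt}{t}$ (here $s=n/p$, $q=n$), and $\|\xi\|^n_{\Pi^*_nf}=\int_{\mathbb{R}^n}|\nabla f(x)\cdot\xi|^ndx$. *)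

theory Defs
  imports "HOL-Analysis.Analysis"
begin

definition C2c_with_gradient :: "('a::euclidean_space \<Rightarrow> real) \<Rightarrow> ('a \<Rightarrow> 'a) \<Rightarrow> bool" where
  "C2c_with_gradient f g \<longleftrightarrow>
     (\<forall>x. (f has_derivative (\<lambda>h. g x \<bullet> h)) (at x)) \<and>
     (\<exists>H :: 'a \<Rightarrow> 'a \<Rightarrow>\<^sub>L 'a.
        (\<forall>x. (g has_derivative blinfun_apply (H x)) (at x)) \<and> continuous_on UNIV H) \<and>
     compact (closure {x. f x \<noteq> 0})"

definition Delta :: "'a::real_vector \<Rightarrow> ('a \<Rightarrow> real) \<Rightarrow> 'a \<Rightarrow> real" where
  "Delta h f x = f (x + h) - f x"

definition Lp_norm :: "real \<Rightarrow> ('a::euclidean_space \<Rightarrow> real) \<Rightarrow> real" where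
  "Lp_norm p u = (\<integral>x. \<bar>u x\<bar> powr p \<partial>lborel) powr (1 / p)"

(* integral over t in (0,inf) of t^(-sq) * ||Delta_(t xi) f||_p^q dt/t, i.e. the (sq)-th power of the norm of xi w.r.t. the body Pi^{star,s}_{p,q} f *)
definition PiStar_spq_pow :: "real \<Rightarrow> real \<Rightarrow> real \<Rightarrow> ('a::euclidean_space \<Rightarrow> real) \<Rightarrow> 'a \<Rightarrow> real" where
  "PiStar_spq_pow s p q f \<xi> =
     (\<integral>t\<in>{0<..}. t powr (- s * q) * Lp_norm p (Delta (t *\<^sub>R \<xi>) f) powr q / t \<partial>lborel)"

end

theory Submission
  imports Defs
begin

(* Write phi_p(t) = ||Delta_{t xi} f||_p^n and eps = n (1 - n/p), so that
     (1 - n/p) t^(-n^2/p) phi_p(t) / t = (1/n) eps t^(eps - 1) phi_p(t) / t^n.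
   As (p, t) -> (n+, 0+), phi_p(t) / t^n = ||Delta_{t xi} f / t||_p^n tends to
   int |grad f . xi|^n by dominated convergence, the difference quotients being bounded by the
   mean value theorem and supported in a fixed ball. On (0, 1] the probability densities
   eps t^(eps - 1) concentrate at t = 0 as eps -> 0, so that part of the integral tends to
   (1/n) int |grad f . xi|^n, while phi_p is bounded, so the part over t > 1 is O(1) and is
   killed by the factor 1 - n/p. Finally the outer exponent p/n tends to 1. *)

section \<open>Limits along product filters and dominated convergence\<close>

lemma eventually_prod_at_rightE:
  fixes a :: real
  assumes "\<forall>\<^sub>F (x, y) in F \<times>\<^sub>F at_right a. P x y"
  obtains Q b where "eventually Q F" "a < b" "\<And>x y. Q x \<Longrightarrow> a < y \<Longrightarrow> y < b \<Longrightarrow> P x y"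
proof -
  obtain Q R where "eventually Q F" "eventually R (at_right a)" and "\<And>x y. Q x \<Longrightarrow> R y \<Longrightarrow> P x y"
    using assms unfolding eventually_prod_filter by blast
  moreover obtain b where "a < b" "\<And>y. a < y \<Longrightarrow> y < b \<Longrightarrow> R y"
    using \<open>eventually R (at_right a)\<close> unfolding eventually_at_right_field by blast
  ultimately show thesis
    using that by blast
qed

lemma eventually_at_within_Ioi_Times_Ioi:
  fixes a b d :: real
  assumes "0 < d"
  shows "\<forall>\<^sub>F z in at (a, b) within {a<..} \<times> {b<..}. fst z \<in> {a<..a + d} \<and> snd z \<in> {b<..b + d}"
proof -
  have "\<forall>\<^sub>F z in at (a, b) within {a<..} \<times> {b<..}. dist z (a, b) < d"
    using tendstoD[OF tendsto_ident_at[of "(a, b)" "{a<..} \<times> {b<..}"] assms] by simp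
  moreover have "\<forall>\<^sub>F z in at (a, b) within {a<..} \<times> {b<..}. z \<in> {a<..} \<times> {b<..}"
    by (simp add: eventually_at_filter)
  ultimately show ?thesis
  proof eventually_elim
    case (elim z)
    then show ?case
      using dist_fst_le[of z "(a, b)"] dist_snd_le[of z "(a, b)"]
      by (auto simp: dist_real_def)
  qed
qed

lemma prod_filter_at_within_le_at_within_Times:
  "(at a within A) \<times>\<^sub>F (at b within B) \<le> at (a, b) within A \<times> B"
proof -
  have "(at a within A) \<times>\<^sub>F (at b within B) \<le> nhds a \<times>\<^sub>F nhds b"
    by (intro prod_filter_mono) (simp_all add: at_within_def)
  moreover have "(at a within A) \<times>\<^sub>F (at b within B) \<le> principal (A - {a}) \<times>\<^sub>F principal (B - {b})"
    by (intro prod_filter_mono) (simp_all add: at_within_def)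
  moreover have "principal ((A - {a}) \<times> (B - {b})) \<le> principal (A \<times> B - {(a, b)})"
    by auto
  ultimately show ?thesis
    unfolding at_within_def nhds_prod principal_prod_principal
    by (intro le_infI) (auto intro: order_trans)
qed

lemma integral_dominated_convergence_at_within:
  fixes s :: "'c::first_countable_topology \<Rightarrow> 'a \<Rightarrow> 'b::{banach, second_countable_topology}"
    and w :: "'a \<Rightarrow> real"
  assumes "f \<in> borel_measurable M" "\<And>y. s y \<in> borel_measurable M" "integrable M w"
    and lim: "AE x in M. ((\<lambda>y. s y x) \<longlongrightarrow> f x) (at c within S)"
    and bound: "\<forall>\<^sub>F y in at c within S. AE x in M. norm (s y x) \<le> w x"
  shows "((\<lambda>y. integral\<^sup>L M (s y)) \<longlongrightarrow> integral\<^sup>L M f) (at c within S)"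
  unfolding tendsto_at_iff_sequentially comp_def
proof (intro allI impI)
  fix X :: "nat \<Rightarrow> 'c"
  assume "\<forall>i. X i \<in> S - {c}" "X \<longlonglongrightarrow> c"
  then have X_lim: "filterlim X (at c within S) sequentially"
    by (simp add: filterlim_at)
  obtain n0 where n0: "\<And>n. n0 \<le> n \<Longrightarrow> AE x in M. norm (s (X n) x) \<le> w x"
    using filterlim_iff[THEN iffD1, OF X_lim, rule_format, OF bound]
    by (auto simp: eventually_sequentially)
  show "(\<lambda>n. integral\<^sup>L M (s (X n))) \<longlonglongrightarrow> integral\<^sup>L M f"
  proof (rule LIMSEQ_offset[of _ n0], rule integral_dominated_convergence)
    show "AE x in M. norm (s (X (n + n0)) x) \<le> w x" for n
      by (rule n0) simp
    show "AE x in M. (\<lambda>n. s (X (n + n0)) x) \<longlonglongrightarrow> f x"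
      using lim
    proof eventually_elim
      case (elim x)
      then show ?case
        by (intro LIMSEQ_ignore_initial_segment filterlim_compose[OF _ X_lim])
    qed
  qed (use assms in auto)
qed

section \<open>Averages against the densities eps * t powr (eps - 1) on (0, 1]\<close>

lemma set_integral_eq_if_has_integral_nonneg:
  fixes f :: "real \<Rightarrow> real"
  assumes I: "(f has_integral I) S" and nonneg: "\<And>x. x \<in> S \<Longrightarrow> 0 \<le> f x"
    and meas: "set_borel_measurable lborel S f"
  shows "set_integrable lborel S f" and "(\<integral>x\<in>S. f x \<partial>lborel) = I"
proof -
  have "set_integrable lebesgue S f"
    using nonnegative_absolutely_integrable_1[OF has_integral_integrable[OF I] nonneg]
    by (simp add: absolutely_integrable_on_def)
  then show int: "set_integrable lborel S f"
    using meas by (simp add: set_integrable_def set_borel_measurable_def integrable_completion)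
  show "(\<integral>x\<in>S. f x \<partial>lborel) = I"
    using set_borel_integral_eq_integral(2)[OF int] integral_unique[OF I] by simp
qed

lemma set_integral_powr_Ioc_0_1:
  fixes \<epsilon> :: real
  assumes "0 < \<epsilon>"
  shows "set_integrable lborel {0<..1} (\<lambda>t. t powr (\<epsilon> - 1))"
    and "(\<integral>t\<in>{0<..1}. t powr (\<epsilon> - 1) \<partial>lborel) = 1 / \<epsilon>"
proof -
  have "((\<lambda>t. t powr (\<epsilon> - 1)) has_integral 1 / \<epsilon>) {0..1}"
    using has_integral_powr_from_0[of "\<epsilon> - 1" 1] assms by simp
  then have "((\<lambda>t. t powr (\<epsilon> - 1)) has_integral 1 / \<epsilon>) {0<..1}"
    by (subst has_integral_spike_set_eq) (auto intro: negligible_subset[of "{0}"])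
  then show "set_integrable lborel {0<..1} (\<lambda>t. t powr (\<epsilon> - 1))"
    and "(\<integral>t\<in>{0<..1}. t powr (\<epsilon> - 1) \<partial>lborel) = 1 / \<epsilon>"
    by (auto intro!: set_integral_eq_if_has_integral_nonneg simp: set_borel_measurable_def)
qed

lemma set_integral_powr_Ioi_1:
  fixes s :: real
  assumes "0 < s"
  shows "set_integrable lborel {1<..} (\<lambda>t. t powr (- s - 1))"
    and "(\<integral>t\<in>{1<..}. t powr (- s - 1) \<partial>lborel) = 1 / s"
proof -
  have "((\<lambda>t. t powr (- s - 1)) has_integral 1 / s) {1..}"
    using has_integral_powr_to_inf[of "- s - 1" 1] assms by simp
  then have "((\<lambda>t. t powr (- s - 1)) has_integral 1 / s) {1<..}"
    by (subst has_integral_spike_set_eq) (auto intro: negligible_subset[of "{1}"])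
  then show "set_integrable lborel {1<..} (\<lambda>t. t powr (- s - 1))"
    and "(\<integral>t\<in>{1<..}. t powr (- s - 1) \<partial>lborel) = 1 / s"
    by (auto intro!: set_integral_eq_if_has_integral_nonneg simp: set_borel_measurable_def)
qed

lemma set_integral_powr_tail_bound:
  fixes s C :: real and \<phi> :: "real \<Rightarrow> real"
  assumes s: "0 < s" and [measurable]: "\<phi> \<in> borel_measurable lborel"
    and bnd: "\<And>t. 1 < t \<Longrightarrow> 0 \<le> \<phi> t \<and> \<phi> t \<le> C"
  shows "set_integrable lborel {1<..} (\<lambda>t. t powr (- s) * \<phi> t / t)"
    and "0 \<le> (\<integral>t\<in>{1<..}. t powr (- s) * \<phi> t / t \<partial>lborel)"
    and "(\<integral>t\<in>{1<..}. t powr (- s) * \<phi> t / t \<partial>lborel) \<le> C / s"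
proof -
  have le: "0 \<le> t powr (- s) * \<phi> t / t \<and> t powr (- s) * \<phi> t / t \<le> C * t powr (- s - 1)"
    if "1 < t" for t
  proof -
    have "t powr (- s) * \<phi> t / t = \<phi> t * t powr (- s - 1)"
      using that by (simp add: powr_diff)
    then show ?thesis
      using bnd[OF that] by (simp add: mult_right_mono)
  qed
  note dom = set_integral_powr_Ioi_1[OF s]
  have "\<bar>t powr (- s) * \<phi> t / t\<bar> \<le> \<bar>C * t powr (- s - 1)\<bar>" if "1 < t" for t
    using le[OF that] by linarith
  then show int: "set_integrable lborel {1<..} (\<lambda>t. t powr (- s) * \<phi> t / t)"
    by (intro set_integrable_bound[OF set_integrable_mult_right[OF dom(1), of C]])
       (auto simp: set_borel_measurable_def intro!: AE_I2)
  show "0 \<le> (\<integral>t\<in>{1<..}. t powr (- s) * \<phi> t / t \<partial>lborel)"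
    unfolding set_lebesgue_integral_def
    by (intro Bochner_Integration.integral_nonneg) (simp add: indicator_def le)
  have "(\<integral>t\<in>{1<..}. t powr (- s) * \<phi> t / t \<partial>lborel) \<le> (\<integral>t\<in>{1<..}. C * t powr (- s - 1) \<partial>lborel)"
    using le by (intro set_integral_mono int set_integrable_mult_right dom(1)) auto
  then show "(\<integral>t\<in>{1<..}. t powr (- s) * \<phi> t / t \<partial>lborel) \<le> C / s"
    using dom(2) by simp
qed

lemma abs_powr_weighted_deviation_le:
  fixes \<epsilon> \<delta> e K t y A :: real
  assumes \<epsilon>: "0 < \<epsilon>" and \<delta>: "0 < \<delta>" and t: "0 < t" "t \<le> 1" and "0 \<le> e" "0 \<le> K"
    and near: "t < \<delta> \<Longrightarrow> \<bar>y - A\<bar> \<le> e" and far: "\<delta> \<le> t \<Longrightarrow> \<bar>y - A\<bar> \<le> K"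
  shows "\<bar>t powr (\<epsilon> - 1) * (y - A)\<bar> \<le> e * t powr (\<epsilon> - 1) + K / \<delta>"
proof (cases "t < \<delta>")
  case True
  then have "\<bar>t powr (\<epsilon> - 1) * (y - A)\<bar> \<le> t powr (\<epsilon> - 1) * e"
    unfolding abs_mult using near by (simp add: mult_left_mono)
  moreover have "0 \<le> K / \<delta>"
    using assms by simp
  ultimately show ?thesis
    by (simp add: mult.commute)
next
  case False
  have "t powr (\<epsilon> - 1) \<le> t powr (-1)"
    using t \<epsilon> by (intro powr_mono') auto
  also have "\<dots> \<le> 1 / \<delta>"
    using t False \<delta> by (simp add: powr_minus_divide frac_le)
  finally have "\<bar>t powr (\<epsilon> - 1) * (y - A)\<bar> \<le> 1 / \<delta> * K"
    unfolding abs_mult using far False assms by (intro mult_mono) auto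
  moreover have "0 \<le> e * t powr (\<epsilon> - 1)"
    using assms by simp
  ultimately show ?thesis
    by simp
qed

lemma powr_weighted_average_estimate:
  fixes \<epsilon> \<delta> e K A :: real and \<psi> :: "real \<Rightarrow> real"
  assumes \<epsilon>: "0 < \<epsilon>" and \<delta>: "0 < \<delta>" "\<delta> \<le> 1"
    and [measurable]: "\<psi> \<in> borel_measurable lborel"
    and near: "\<And>t. 0 < t \<Longrightarrow> t < \<delta> \<Longrightarrow> \<bar>\<psi> t - A\<bar> \<le> e"
    and far: "\<And>t. \<delta> \<le> t \<Longrightarrow> t \<le> 1 \<Longrightarrow> \<bar>\<psi> t - A\<bar> \<le> K"
  shows "set_integrable lborel {0<..1} (\<lambda>t. t powr (\<epsilon> - 1) * \<psi> t)"
    and "\<bar>\<epsilon> * (\<integral>t\<in>{0<..1}. t powr (\<epsilon> - 1) * \<psi> t \<partial>lborel) - A\<bar> \<le> e + \<epsilon> * K / \<delta>"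
proof -
  note kernel = set_integral_powr_Ioc_0_1[OF \<epsilon>]
  have "0 \<le> e" "0 \<le> K"
    using near[of "\<delta> / 2"] far[of \<delta>] \<delta> by auto
  then have pw: "\<bar>t powr (\<epsilon> - 1) * (\<psi> t - A)\<bar> \<le> e * t powr (\<epsilon> - 1) + K / \<delta>"
    if "0 < t" "t \<le> 1" for t
    using that near far by (intro abs_powr_weighted_deviation_le[OF \<epsilon> \<delta>(1)])
  have bound_int: "set_integrable lborel {0<..1} (\<lambda>t. e * t powr (\<epsilon> - 1) + K / \<delta>)"
    using kernel(1) by (intro set_integral_add set_integrable_mult_right) (auto simp: set_integrable_def)
  have dev_int: "set_integrable lborel {0<..1} (\<lambda>t. t powr (\<epsilon> - 1) * (\<psi> t - A))"
    by (rule set_integrable_bound[OF bound_int])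
       (use pw in \<open>auto simp: set_borel_measurable_def intro!: AE_I2 order_trans[OF _ abs_ge_self]\<close>)
  have "set_integrable lborel {0<..1} (\<lambda>t. t powr (\<epsilon> - 1) * (\<psi> t - A) + A * t powr (\<epsilon> - 1))"
    using dev_int kernel(1) by (intro set_integral_add(1) set_integrable_mult_right)
  then show int: "set_integrable lborel {0<..1} (\<lambda>t. t powr (\<epsilon> - 1) * \<psi> t)"
    by (simp add: algebra_simps)
  have "\<epsilon> * (\<integral>t\<in>{0<..1}. t powr (\<epsilon> - 1) * \<psi> t \<partial>lborel) - A
      = \<epsilon> * (\<integral>t\<in>{0<..1}. t powr (\<epsilon> - 1) * (\<psi> t - A) \<partial>lborel)"
  proof -
    have "(\<integral>t\<in>{0<..1}. t powr (\<epsilon> - 1) * (\<psi> t - A) \<partial>lborel)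
        = (\<integral>t\<in>{0<..1}. t powr (\<epsilon> - 1) * \<psi> t \<partial>lborel) - A * (\<integral>t\<in>{0<..1}. t powr (\<epsilon> - 1) \<partial>lborel)"
      using int kernel(1) by (simp add: right_diff_distrib set_integral_diff(2))
    then show ?thesis
      using kernel(2) \<epsilon> by (simp add: right_diff_distrib)
  qed
  also have "\<bar>\<dots>\<bar> \<le> \<epsilon> * (\<integral>t\<in>{0<..1}. e * t powr (\<epsilon> - 1) + K / \<delta> \<partial>lborel)"
  proof -
    have "\<bar>\<integral>t\<in>{0<..1}. t powr (\<epsilon> - 1) * (\<psi> t - A) \<partial>lborel\<bar>
        \<le> (\<integral>t\<in>{0<..1}. \<bar>t powr (\<epsilon> - 1) * (\<psi> t - A)\<bar> \<partial>lborel)"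
      using set_integral_norm_bound[OF dev_int] by simp
    also have "\<dots> \<le> (\<integral>t\<in>{0<..1}. e * t powr (\<epsilon> - 1) + K / \<delta> \<partial>lborel)"
      using pw by (intro set_integral_mono set_integrable_abs dev_int bound_int) auto
    finally show ?thesis
      using \<epsilon> by (simp add: abs_mult mult_left_mono)
  qed
  also have "\<dots> = e + \<epsilon> * K / \<delta>"
  proof -
    have "(\<integral>t\<in>{0<..1}. e * t powr (\<epsilon> - 1) + K / \<delta> \<partial>lborel) = e / \<epsilon> + K / \<delta>"
      using kernel by (subst set_integral_add(2)[OF set_integrable_mult_right[OF kernel(1)]])
        (auto simp: set_integrable_def set_lebesgue_integral_def)
    then show ?thesis
      using \<epsilon> by (simp add: field_simps)
  qed
  finally show "\<bar>\<epsilon> * (\<integral>t\<in>{0<..1}. t powr (\<epsilon> - 1) * \<psi> t \<partial>lborel) - A\<bar> \<le> e + \<epsilon> * K / \<delta>" .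
qed

lemma eventually_powr_weighted_average_near:
  fixes \<epsilon> :: "'p \<Rightarrow> real" and \<psi> :: "'p \<Rightarrow> real \<Rightarrow> real" and A e :: real
  assumes \<epsilon>: "(\<epsilon> \<longlongrightarrow> 0) F" "eventually (\<lambda>p. 0 < \<epsilon> p) F"
    and meas: "\<And>p. \<psi> p \<in> borel_measurable lborel"
    and lim: "((\<lambda>(p, t). \<psi> p t) \<longlongrightarrow> A) (F \<times>\<^sub>F at_right 0)"
    and bnd: "\<forall>\<delta>>0. \<exists>B. eventually (\<lambda>p. \<forall>t\<in>{\<delta>..1}. \<bar>\<psi> p t\<bar> \<le> B) F"
    and e: "0 < e"
  shows "eventually (\<lambda>p. set_integrable lborel {0<..1} (\<lambda>t. t powr (\<epsilon> p - 1) * \<psi> p t) \<and>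
           dist (\<epsilon> p * (\<integral>t\<in>{0<..1}. t powr (\<epsilon> p - 1) * \<psi> p t \<partial>lborel)) A < e) F"
proof -
  obtain P \<delta>0 where P: "eventually P F" "0 < \<delta>0"
    and near: "\<And>p t. P p \<Longrightarrow> 0 < t \<Longrightarrow> t < \<delta>0 \<Longrightarrow> dist (\<psi> p t) A < e / 2"
  proof (rule eventually_prod_at_rightE)
    show "\<forall>\<^sub>F (p, t) in F \<times>\<^sub>F at_right 0. dist (\<psi> p t) A < e / 2"
      using tendstoD[OF lim, of "e / 2"] e by (simp add: case_prod_beta')
  qed blast
  define \<delta> where "\<delta> = min \<delta>0 1"
  have \<delta>: "0 < \<delta>" "\<delta> \<le> 1" "\<delta> \<le> \<delta>0"
    using P(2) by (auto simp: \<delta>_def)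
  obtain B where B: "eventually (\<lambda>p. \<forall>t\<in>{\<delta>..1}. \<bar>\<psi> p t\<bar> \<le> B) F"
    using bnd \<delta>(1) by blast
  define K where "K = \<bar>B\<bar> + \<bar>A\<bar>"
  have "eventually (\<lambda>p. \<epsilon> p < e * \<delta> / (2 * (K + 1))) F"
    using e \<delta> by (intro order_tendstoD(2)[OF \<epsilon>(1)]) (simp add: K_def)
  then show ?thesis
    using P(1) B \<epsilon>(2)
  proof eventually_elim
    case (elim p)
    have near_p: "\<bar>\<psi> p t - A\<bar> \<le> e / 2" if "0 < t" "t < \<delta>" for t
      using near[OF elim(2) that(1)] that \<delta> by (simp add: dist_real_def)
    have far_p: "\<bar>\<psi> p t - A\<bar> \<le> K" if "\<delta> \<le> t" "t \<le> 1" for t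
    proof -
      have "\<bar>\<psi> p t\<bar> \<le> B"
        using elim(3) that by simp
      then show ?thesis
        unfolding K_def by linarith
    qed
    note average = powr_weighted_average_estimate[OF elim(4) \<delta>(1,2) meas near_p far_p]
    have "\<epsilon> p * K \<le> \<epsilon> p * (K + 1)"
      using elim(4) by simp
    also have "\<dots> < e * \<delta> / 2"
      using elim(1) by (simp add: K_def field_simps)
    finally have "\<epsilon> p * K / \<delta> < e / 2"
      using \<delta> by (simp add: field_simps)
    then show ?case
      using average unfolding dist_real_def by linarith
  qed
qed

lemma tendsto_powr_weighted_average:
  fixes \<epsilon> :: "'p \<Rightarrow> real" and \<psi> :: "'p \<Rightarrow> real \<Rightarrow> real" and A :: real
  assumes "(\<epsilon> \<longlongrightarrow> 0) F" "eventually (\<lambda>p. 0 < \<epsilon> p) F"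
    and "\<And>p. \<psi> p \<in> borel_measurable lborel"
    and "((\<lambda>(p, t). \<psi> p t) \<longlongrightarrow> A) (F \<times>\<^sub>F at_right 0)"
    and "\<forall>\<delta>>0. \<exists>B. eventually (\<lambda>p. \<forall>t\<in>{\<delta>..1}. \<bar>\<psi> p t\<bar> \<le> B) F"
  shows "eventually (\<lambda>p. set_integrable lborel {0<..1} (\<lambda>t. t powr (\<epsilon> p - 1) * \<psi> p t)) F"
    and "((\<lambda>p. \<epsilon> p * (\<integral>t\<in>{0<..1}. t powr (\<epsilon> p - 1) * \<psi> p t \<partial>lborel)) \<longlongrightarrow> A) F"
proof -
  note near = eventually_powr_weighted_average_near[OF assms]
  show "eventually (\<lambda>p. set_integrable lborel {0<..1} (\<lambda>t. t powr (\<epsilon> p - 1) * \<psi> p t)) F"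
    by (rule eventually_mono[OF near[of 1]]) simp_all
  show "((\<lambda>p. \<epsilon> p * (\<integral>t\<in>{0<..1}. t powr (\<epsilon> p - 1) * \<psi> p t \<partial>lborel)) \<longlongrightarrow> A) F"
  proof (rule tendstoI)
    fix e :: real
    assume "0 < e"
    show "eventually (\<lambda>p. dist (\<epsilon> p * (\<integral>t\<in>{0<..1}. t powr (\<epsilon> p - 1) * \<psi> p t \<partial>lborel)) A < e) F"
      by (rule eventually_mono[OF near[OF \<open>0 < e\<close>]]) simp
  qed
qed

lemma tendsto_scaled_powr_tail_integral:
  fixes N C :: real and \<phi> :: "real \<Rightarrow> real \<Rightarrow> real"
  assumes N: "0 < N" and meas: "\<And>p. \<phi> p \<in> borel_measurable lborel"
    and bnd: "\<And>p t. N < p \<Longrightarrow> 1 < t \<Longrightarrow> 0 \<le> \<phi> p t \<and> \<phi> p t \<le> C"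
  shows "((\<lambda>p. (1 - N / p) * (\<integral>t\<in>{1<..}. t powr (- (N / p) * N) * \<phi> p t / t \<partial>lborel))
           \<longlongrightarrow> 0) (at_right N)"
proof (rule tendsto_sandwich[of "\<lambda>_. 0" _ _ "\<lambda>p. C * (p - N) / N\<^sup>2"])
  have tail: "0 \<le> (\<integral>t\<in>{1<..}. t powr (- (N / p) * N) * \<phi> p t / t \<partial>lborel)
      \<and> (\<integral>t\<in>{1<..}. t powr (- (N / p) * N) * \<phi> p t / t \<partial>lborel) \<le> C * p / N\<^sup>2"
    if "N < p" for p
    using set_integral_powr_tail_bound[of "N * N / p", OF _ meas bnd[OF that]] N that
    by (simp add: power2_eq_square)
  show "\<forall>\<^sub>F p in at_right N. 0 \<le> (1 - N / p) * (\<integral>t\<in>{1<..}. t powr (- (N / p) * N) * \<phi> p t / t \<partial>lborel)"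
    using eventually_at_right_less by eventually_elim (use N tail in simp)
  show "\<forall>\<^sub>F p in at_right N. (1 - N / p) * (\<integral>t\<in>{1<..}. t powr (- (N / p) * N) * \<phi> p t / t \<partial>lborel)
      \<le> C * (p - N) / N\<^sup>2"
    using eventually_at_right_less
  proof eventually_elim
    case (elim p)
    then have "(1 - N / p) * (\<integral>t\<in>{1<..}. t powr (- (N / p) * N) * \<phi> p t / t \<partial>lborel)
        \<le> (1 - N / p) * (C * p / N\<^sup>2)"
      using N tail[OF elim] by (intro mult_left_mono) auto
    also have "\<dots> = C * (p - N) / N\<^sup>2"
      using elim N by (simp add: field_simps)
    finally show ?case .
  qed
  have "((\<lambda>p. C * (p - N) / N\<^sup>2) \<longlongrightarrow> C * (N - N) / N\<^sup>2) (at_right N)"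
    by (intro tendsto_intros) (use N in auto)
  then show "((\<lambda>p. C * (p - N) / N\<^sup>2) \<longlongrightarrow> 0) (at_right N)"
    by simp
qed simp

lemma set_integral_powr_Ioi_0_split:
  fixes N p C :: real and \<phi> :: "real \<Rightarrow> real"
  assumes N: "0 < N" "N < p" and meas: "\<phi> \<in> borel_measurable lborel"
    and bnd: "\<And>t. 1 < t \<Longrightarrow> 0 \<le> \<phi> t \<and> \<phi> t \<le> C"
    and head: "set_integrable lborel {0<..1} (\<lambda>t. t powr (N * (1 - N / p) - 1) * (\<phi> t / t powr N))"
  shows "(\<integral>t\<in>{0<..}. t powr (- (N / p) * N) * \<phi> t / t \<partial>lborel)
    = (\<integral>t\<in>{0<..1}. t powr (N * (1 - N / p) - 1) * (\<phi> t / t powr N) \<partial>lborel)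
      + (\<integral>t\<in>{1<..}. t powr (- (N / p) * N) * \<phi> t / t \<partial>lborel)"
proof -
  have integrand: "t powr (- (N / p) * N) * \<phi> t / t = t powr (N * (1 - N / p) - 1) * (\<phi> t / t powr N)"
    if "0 < t" for t
  proof -
    have "N * (1 - N / p) - 1 = - (N / p) * N + N - 1"
      by (simp add: algebra_simps)
    then have "t powr (N * (1 - N / p) - 1) = t powr (- (N / p) * N) * t powr N / t"
      using that by (simp only: powr_diff powr_add powr_one)
    then show ?thesis
      using that by simp
  qed
  have "set_integrable lborel {0<..1} (\<lambda>t. t powr (- (N / p) * N) * \<phi> t / t)"
    using head by (subst set_integrable_cong[OF refl refl integrand]) auto
  moreover have "set_integrable lborel {1<..} (\<lambda>t. t powr (- (N / p) * N) * \<phi> t / t)"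
    using set_integral_powr_tail_bound(1)[of "N * N / p", OF _ meas bnd] N by simp
  ultimately have "(\<integral>t\<in>{0<..1} \<union> {1<..}. t powr (- (N / p) * N) * \<phi> t / t \<partial>lborel)
      = (\<integral>t\<in>{0<..1}. t powr (- (N / p) * N) * \<phi> t / t \<partial>lborel)
        + (\<integral>t\<in>{1<..}. t powr (- (N / p) * N) * \<phi> t / t \<partial>lborel)"
    by (intro set_integral_Un) auto
  also have "(\<integral>t\<in>{0<..1}. t powr (- (N / p) * N) * \<phi> t / t \<partial>lborel)
      = (\<integral>t\<in>{0<..1}. t powr (N * (1 - N / p) - 1) * (\<phi> t / t powr N) \<partial>lborel)"
    by (intro set_lebesgue_integral_cong allI impI integrand) auto
  finally show ?thesis
    by (simp add: ivl_disj_un)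
qed

lemma tendsto_scaled_powr_integral:
  fixes N C A :: real and \<phi> :: "real \<Rightarrow> real \<Rightarrow> real"
  assumes N: "0 < N"
    and meas[measurable]: "\<And>p. \<phi> p \<in> borel_measurable lborel"
    and bnd: "\<And>p t. N < p \<Longrightarrow> 0 < t \<Longrightarrow> 0 \<le> \<phi> p t \<and> \<phi> p t \<le> C"
    and lim: "((\<lambda>(p, t). \<phi> p t / t powr N) \<longlongrightarrow> A) (at_right N \<times>\<^sub>F at_right 0)"
  shows "((\<lambda>p. (1 - N / p) * (\<integral>t\<in>{0<..}. t powr (- (N / p) * N) * \<phi> p t / t \<partial>lborel))
           \<longlongrightarrow> A / N) (at_right N)"
proof -
  define \<epsilon> where "\<epsilon> p = N * (1 - N / p)" for p
  define head where "head p = (\<integral>t\<in>{0<..1}. t powr (\<epsilon> p - 1) * (\<phi> p t / t powr N) \<partial>lborel)" for p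
  define tail where "tail p = (\<integral>t\<in>{1<..}. t powr (- (N / p) * N) * \<phi> p t / t \<partial>lborel)" for p
  have "(\<epsilon> \<longlongrightarrow> N * (1 - N / N)) (at_right N)"
    unfolding \<epsilon>_def by (intro tendsto_intros) (use N in auto)
  then have \<epsilon>_lim: "(\<epsilon> \<longlongrightarrow> 0) (at_right N)"
    using N by simp
  have \<epsilon>_pos: "\<forall>\<^sub>F p in at_right N. 0 < \<epsilon> p"
    using eventually_at_right_less by eventually_elim (use N in \<open>simp add: \<epsilon>_def\<close>)
  have far_bound: "\<forall>\<delta>>0. \<exists>B. \<forall>\<^sub>F p in at_right N. \<forall>t\<in>{\<delta>..1}. \<bar>\<phi> p t / t powr N\<bar> \<le> B"
  proof (intro allI impI exI eventually_mono[OF eventually_at_right_less] ballI)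
    fix \<delta> p t :: real
    assume "0 < \<delta>" "N < p" "t \<in> {\<delta>..1}"
    then show "\<bar>\<phi> p t / t powr N\<bar> \<le> C / \<delta> powr N"
      using bnd[of p t] N by (auto intro!: frac_le powr_mono2)
  qed
  have "(\<lambda>t. \<phi> p t / t powr N) \<in> borel_measurable lborel" for p
    by measurable
  note head_limit = tendsto_powr_weighted_average[OF \<epsilon>_lim \<epsilon>_pos this lim far_bound]
  have "\<forall>\<^sub>F p in at_right N. (1 - N / p) * (\<integral>t\<in>{0<..}. t powr (- (N / p) * N) * \<phi> p t / t \<partial>lborel)
      = \<epsilon> p * head p / N + (1 - N / p) * tail p"
    using eventually_at_right_less head_limit(1)
  proof eventually_elim
    case (elim p)
    have "0 \<le> \<phi> p t \<and> \<phi> p t \<le> C" if "1 < t" for t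
      using bnd[OF elim(1)] that by simp
    note decomposition = set_integral_powr_Ioi_0_split[OF N elim(1) meas this elim(2)[unfolded \<epsilon>_def]]
    have scale: "(1 - N / p) * (H + T) = N * (1 - N / p) * H / N + (1 - N / p) * T" for H T
      using N elim(1) by (simp add: field_simps)
    show ?case
      unfolding head_def tail_def \<epsilon>_def by (subst decomposition) (simp_all only: scale)
  qed
  moreover have "((\<lambda>p. \<epsilon> p * head p / N + (1 - N / p) * tail p) \<longlongrightarrow> A / N + 0) (at_right N)"
  proof (intro tendsto_add tendsto_divide tendsto_const)
    show "((\<lambda>p. \<epsilon> p * head p) \<longlongrightarrow> A) (at_right N)"
      using head_limit(2) unfolding head_def .
    show "((\<lambda>p. (1 - N / p) * tail p) \<longlongrightarrow> 0) (at_right N)"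
      unfolding tail_def by (rule tendsto_scaled_powr_tail_integral[OF N meas, where C = C]) (simp add: bnd)
  qed (use N in simp)
  ultimately show ?thesis
    by (simp add: tendsto_cong)
qed

section \<open>Difference quotients of compactly supported C^1 functions\<close>

lemma C2c_with_gradientD:
  assumes "C2c_with_gradient f g"
  shows C2c_with_gradient_has_derivative: "(f has_derivative (\<lambda>h. g x \<bullet> h)) (at x)"
    and C2c_with_gradient_continuous_on: "continuous_on UNIV f"
    and C2c_with_gradient_continuous_on_gradient: "continuous_on UNIV g"
proof -
  obtain H :: "'a \<Rightarrow> 'a \<Rightarrow>\<^sub>L 'a" where df: "\<And>x. (f has_derivative (\<lambda>h. g x \<bullet> h)) (at x)"
    and dg: "\<And>x. (g has_derivative blinfun_apply (H x)) (at x)"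
    using assms unfolding C2c_with_gradient_def by blast
  show "(f has_derivative (\<lambda>h. g x \<bullet> h)) (at x)"
    by (rule df)
  show "continuous_on UNIV f"
    using df by (intro has_derivative_continuous_on) auto
  show "continuous_on UNIV g"
    using dg by (intro has_derivative_continuous_on) auto
qed

lemma C2c_with_gradient_support:
  assumes "C2c_with_gradient f g"
  obtains R where "\<And>x. R < norm x \<Longrightarrow> f x = 0 \<and> g x = 0"
proof -
  let ?S = "closure {x. f x \<noteq> 0}"
  have "bounded ?S"
    using assms compact_imp_bounded unfolding C2c_with_gradient_def by blast
  then obtain R where R: "\<And>x. x \<in> ?S \<Longrightarrow> norm x \<le> R"
    unfolding bounded_iff by blast
  have "f x = 0 \<and> g x = 0" if x: "R < norm x" for x
  proof -
    have outside: "x \<in> - ?S"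
      using R[of x] x by (meson ComplI not_le)
    have f0: "f y = 0" if "y \<in> - ?S" for y
      using that closure_subset[of "{x. f x \<noteq> 0}"] by blast
    have "((\<lambda>_. 0) has_derivative (\<lambda>h. g x \<bullet> h)) (at x)"
      by (rule has_derivative_transform_within_open[OF C2c_with_gradient_has_derivative[OF assms]
            open_Compl[OF closed_closure] outside f0])
    then have "(\<lambda>h. g x \<bullet> h) = (\<lambda>h. 0)"
      by (rule has_derivative_unique[OF _ has_derivative_const])
    then have "g x \<bullet> g x = 0"
      by (rule fun_cong)
    then show ?thesis
      using f0[OF outside] by simp
  qed
  then show thesis by (rule that)
qed

lemma bounded_range_if_vanishes_outside_ball:
  fixes h :: "'a::euclidean_space \<Rightarrow> 'b::real_normed_vector"
  assumes "continuous_on UNIV h" and "\<And>x. R < norm x \<Longrightarrow> h x = 0"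
  shows "bounded (range h)"
proof -
  have "h x \<in> insert 0 (h ` cball 0 R)" for x
    using assms(2)[of x] by (cases "norm x \<le> R") auto
  then have "range h \<subseteq> insert 0 (h ` cball 0 R)"
    by blast
  moreover have "compact (h ` cball 0 R)"
    using assms(1) by (intro compact_continuous_image) (auto intro: continuous_on_subset)
  ultimately show ?thesis
    by (meson bounded_insert bounded_subset compact_imp_bounded)
qed

lemma has_real_derivative_along_line:
  fixes f :: "'a::real_inner \<Rightarrow> real"
  assumes "(f has_derivative (\<lambda>h. v \<bullet> h)) (at (x + s *\<^sub>R \<xi>))"
  shows "((\<lambda>s. f (x + s *\<^sub>R \<xi>)) has_real_derivative v \<bullet> \<xi>) (at s)"
  unfolding has_field_derivative_def
  by (rule has_derivative_compose[of "\<lambda>s. x + s *\<^sub>R \<xi>", OF _ assms, THEN has_derivative_eq_rhs])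
     (auto intro!: derivative_eq_intros simp: mult.commute)

lemma Delta_eq_mean_value:
  fixes f :: "'a::real_inner \<Rightarrow> real"
  assumes df: "\<And>x. (f has_derivative (\<lambda>h. g x \<bullet> h)) (at x)" and t: "0 < t"
  obtains s where "Delta (t *\<^sub>R \<xi>) f x = t * (g (x + s *\<^sub>R \<xi>) \<bullet> \<xi>)"
proof -
  have "((\<lambda>s. f (x + s *\<^sub>R \<xi>)) has_real_derivative g (x + s *\<^sub>R \<xi>) \<bullet> \<xi>) (at s)" for s
    by (rule has_real_derivative_along_line[OF df])
  then obtain s where "f (x + t *\<^sub>R \<xi>) - f (x + 0 *\<^sub>R \<xi>) = (t - 0) * (g (x + s *\<^sub>R \<xi>) \<bullet> \<xi>)"
    using MVT2[OF t, of "\<lambda>s. f (x + s *\<^sub>R \<xi>)" "\<lambda>s. g (x + s *\<^sub>R \<xi>) \<bullet> \<xi>"] by blast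
  then show thesis
    by (intro that[of s]) (simp add: Delta_def)
qed

lemma abs_Delta_divide_le:
  fixes f :: "'a::real_inner \<Rightarrow> real"
  assumes "\<And>x. (f has_derivative (\<lambda>h. g x \<bullet> h)) (at x)" and "\<And>x. norm (g x) \<le> L" and "0 < t"
  shows "\<bar>Delta (t *\<^sub>R \<xi>) f x / t\<bar> \<le> L * norm \<xi>"
proof -
  obtain s where "Delta (t *\<^sub>R \<xi>) f x = t * (g (x + s *\<^sub>R \<xi>) \<bullet> \<xi>)"
    using Delta_eq_mean_value assms(1,3) by blast
  then have "\<bar>Delta (t *\<^sub>R \<xi>) f x / t\<bar> = \<bar>g (x + s *\<^sub>R \<xi>) \<bullet> \<xi>\<bar>"
    using assms(3) by simp
  also have "\<dots> \<le> norm (g (x + s *\<^sub>R \<xi>)) * norm \<xi>"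
    by (rule Cauchy_Schwarz_ineq2)
  also have "\<dots> \<le> L * norm \<xi>"
    using assms(2) by (simp add: mult_right_mono)
  finally show ?thesis .
qed

lemma Delta_divide_tendsto:
  fixes f :: "'a::real_inner \<Rightarrow> real"
  assumes "(f has_derivative (\<lambda>h. v \<bullet> h)) (at x)"
  shows "((\<lambda>t. Delta (t *\<^sub>R \<xi>) f x / t) \<longlongrightarrow> v \<bullet> \<xi>) (at_right 0)"
proof -
  have "((\<lambda>s. f (x + s *\<^sub>R \<xi>)) has_real_derivative v \<bullet> \<xi>) (at 0)"
    using assms by (intro has_real_derivative_along_line) simp
  then have "((\<lambda>t. Delta (t *\<^sub>R \<xi>) f x / t) \<longlongrightarrow> v \<bullet> \<xi>) (at 0)"
    by (simp add: DERIV_def Delta_def)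
  then show ?thesis
    by (rule tendsto_within_subset) simp
qed

lemma Delta_eq_0_outside_ball:
  assumes "\<And>x. R < norm x \<Longrightarrow> f x = 0" and "R + norm c < norm x"
  shows "Delta c f x = 0"
proof -
  have "norm x \<le> norm (x + c) + norm c"
    using norm_triangle_ineq4[of "x + c" c] by simp
  then have "R < norm (x + c)" and "R < norm x"
    using assms(2) norm_ge_zero[of c] by linarith+
  then have "f (x + c) = 0" and "f x = 0"
    using assms(1) by blast+
  then show ?thesis
    unfolding Delta_def by simp
qed

lemma tendsto_abs_Delta_divide_powr:
  fixes f :: "'a::real_inner \<Rightarrow> real" and N :: real
  assumes "(f has_derivative (\<lambda>h. v \<bullet> h)) (at x)" and "0 < N"
  shows "((\<lambda>z. \<bar>Delta (snd z *\<^sub>R \<xi>) f x / snd z\<bar> powr fst z) \<longlongrightarrow> \<bar>v \<bullet> \<xi>\<bar> powr N)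
           (at (N, 0) within {N<..} \<times> {0<..})"
proof -
  let ?F = "at (N, 0::real) within {N<..} \<times> {0<..}"
  have "filterlim snd (at_right 0) ?F"
    unfolding filterlim_at
  proof
    show "\<forall>\<^sub>F z in ?F. snd z \<in> {0<..} \<and> snd z \<noteq> 0"
      unfolding eventually_at_filter by (intro always_eventually) auto
    show "(snd \<longlongrightarrow> 0) ?F"
      using tendsto_snd[OF tendsto_ident_at, of "(N, 0::real)"] by simp
  qed
  then have "((\<lambda>z. \<bar>Delta (snd z *\<^sub>R \<xi>) f x / snd z\<bar>) \<longlongrightarrow> \<bar>v \<bullet> \<xi>\<bar>) ?F"
    by (intro tendsto_rabs filterlim_compose[OF Delta_divide_tendsto[OF assms(1)]])
  moreover have "(fst \<longlongrightarrow> N) ?F"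
    using tendsto_fst[OF tendsto_ident_at, of "(N, 0::real)"] by simp
  ultimately show ?thesis
    using assms(2) by (intro tendsto_powr') auto
qed

lemma abs_Delta_divide_powr_le:
  fixes f :: "'a::real_inner \<Rightarrow> real"
  assumes df: "\<And>x. (f has_derivative (\<lambda>h. g x \<bullet> h)) (at x)" and L: "\<And>x. norm (g x) \<le> L"
    and R: "\<And>x. R < norm x \<Longrightarrow> f x = 0"
    and t: "0 < t" "t \<le> 1" and p: "0 \<le> p" "p \<le> q"
  shows "\<bar>Delta (t *\<^sub>R \<xi>) f x / t\<bar> powr p \<le> max 1 (L * norm \<xi>) powr q * indicator (cball 0 (R + norm \<xi>)) x"
proof (cases "norm x \<le> R + norm \<xi>")
  case True
  have "\<bar>Delta (t *\<^sub>R \<xi>) f x / t\<bar> \<le> max 1 (L * norm \<xi>)"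
    using abs_Delta_divide_le[OF df L t(1), of \<xi> x] by linarith
  then have "\<bar>Delta (t *\<^sub>R \<xi>) f x / t\<bar> powr p \<le> max 1 (L * norm \<xi>) powr p"
    using p by (intro powr_mono2) auto
  also have "\<dots> \<le> max 1 (L * norm \<xi>) powr q"
    using p by (intro powr_mono) auto
  finally show ?thesis
    using True by simp
next
  case False
  have "R + norm (t *\<^sub>R \<xi>) < norm x"
    using False t mult_left_le_one_le[of "norm \<xi>" t] by auto
  then have "Delta (t *\<^sub>R \<xi>) f x = 0"
    using R by (intro Delta_eq_0_outside_ball[of R]) auto
  then show ?thesis
    by simp
qed

lemma borel_measurable_Delta_divide_powr:
  fixes f :: "'a::euclidean_space \<Rightarrow> real"
  assumes "continuous_on UNIV f"
  shows "(\<lambda>x. \<bar>Delta (t *\<^sub>R \<xi>) f x / t\<bar> powr p) \<in> borel_measurable lborel"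
proof -
  have [measurable]: "f \<in> borel_measurable borel"
    using assms by (rule borel_measurable_continuous_onI)
  show ?thesis
    unfolding Delta_def by measurable
qed

lemma tendsto_integral_Delta_divide_powr:
  fixes f :: "'a::euclidean_space \<Rightarrow> real" and N :: real
  assumes f: "C2c_with_gradient f g" and N: "0 < N"
  shows "((\<lambda>(p, t). \<integral>x. \<bar>Delta (t *\<^sub>R \<xi>) f x / t\<bar> powr p \<partial>lborel)
           \<longlongrightarrow> (\<integral>x. \<bar>g x \<bullet> \<xi>\<bar> powr N \<partial>lborel)) (at_right N \<times>\<^sub>F at_right 0)"
proof -
  obtain R where R: "\<And>x. R < norm x \<Longrightarrow> f x = 0 \<and> g x = 0"
    using C2c_with_gradient_support[OF f] by blast
  obtain L where L: "\<And>x. norm (g x) \<le> L"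
    using bounded_range_if_vanishes_outside_ball[OF C2c_with_gradient_continuous_on_gradient[OF f]] R
    unfolding bounded_iff by blast
  define w where "w x = max 1 (L * norm \<xi>) powr (N + 1) * indicator (cball 0 (R + norm \<xi>)) x" for x :: 'a
  have [measurable]: "g \<in> borel_measurable borel"
    using C2c_with_gradient_continuous_on_gradient[OF f] by (rule borel_measurable_continuous_onI)
  \<comment> \<open>Limits are characterised by sequences only along filters \<open>at x within S\<close>, so dominated
    convergence is applied at \<open>(N, 0)\<close> within the open quadrant and then restricted.\<close>
  have "((\<lambda>z. \<integral>x. \<bar>Delta (snd z *\<^sub>R \<xi>) f x / snd z\<bar> powr fst z \<partial>lborel)
      \<longlongrightarrow> (\<integral>x. \<bar>g x \<bullet> \<xi>\<bar> powr N \<partial>lborel)) (at (N, 0) within {N<..} \<times> {0<..})"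
  proof (rule integral_dominated_convergence_at_within[where w = w])
    show "(\<lambda>x. \<bar>Delta (snd z *\<^sub>R \<xi>) f x / snd z\<bar> powr fst z) \<in> borel_measurable lborel" for z
      by (rule borel_measurable_Delta_divide_powr[OF C2c_with_gradient_continuous_on[OF f]])
    show "(\<lambda>x. \<bar>g x \<bullet> \<xi>\<bar> powr N) \<in> borel_measurable lborel"
      by measurable
    show "integrable lborel w"
      unfolding w_def using emeasure_lborel_cball_finite
      by (intro integrable_mult_right integrable_real_indicator) auto
    show "AE x in lborel. ((\<lambda>z. \<bar>Delta (snd z *\<^sub>R \<xi>) f x / snd z\<bar> powr fst z)
        \<longlongrightarrow> \<bar>g x \<bullet> \<xi>\<bar> powr N) (at (N, 0) within {N<..} \<times> {0<..})"
      using C2c_with_gradient_has_derivative[OF f] N by (intro AE_I2 tendsto_abs_Delta_divide_powr)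
    have "\<forall>\<^sub>F z in at (N, 0::real) within {N<..} \<times> {0<..}. fst z \<in> {N<..N + 1} \<and> snd z \<in> {0<..1}"
      using eventually_at_within_Ioi_Times_Ioi[of 1 N 0] by simp
    then show "\<forall>\<^sub>F z in at (N, 0) within {N<..} \<times> {0<..}.
        AE x in lborel. norm (\<bar>Delta (snd z *\<^sub>R \<xi>) f x / snd z\<bar> powr fst z) \<le> w x"
    proof eventually_elim
      case (elim z)
      have "\<bar>Delta (snd z *\<^sub>R \<xi>) f x / snd z\<bar> powr fst z \<le> w x" for x
        unfolding w_def using elim N R
        by (intro abs_Delta_divide_powr_le[OF C2c_with_gradient_has_derivative[OF f] L]) auto
      then show ?case
        by (intro AE_I2) simp
    qed
  qed
  then have "((\<lambda>z. \<integral>x. \<bar>Delta (snd z *\<^sub>R \<xi>) f x / snd z\<bar> powr fst z \<partial>lborel)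
      \<longlongrightarrow> (\<integral>x. \<bar>g x \<bullet> \<xi>\<bar> powr N \<partial>lborel)) (at_right N \<times>\<^sub>F at_right 0)"
    by (rule tendsto_mono[OF prod_filter_at_within_le_at_within_Times])
  then show ?thesis
    unfolding case_prod_beta' .
qed

section \<open>L^p norms of differences\<close>

lemma Lp_norm_powr:
  assumes "0 < p"
  shows "Lp_norm p u powr N = (\<integral>x. \<bar>u x\<bar> powr p \<partial>lborel) powr (N / p)"
  unfolding Lp_norm_def using assms by (simp add: powr_powr)

lemma Lp_norm_divide:
  assumes "0 < c" and "0 < p"
  shows "Lp_norm p (\<lambda>x. u x / c) = Lp_norm p u / c"
proof -
  have "(\<lambda>x. \<bar>u x / c\<bar> powr p) = (\<lambda>x. \<bar>u x\<bar> powr p / c powr p)"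
    using assms by (simp add: abs_divide powr_divide)
  moreover have "0 \<le> (\<integral>x. \<bar>u x\<bar> powr p \<partial>lborel)"
    by (simp add: Bochner_Integration.integral_nonneg)
  ultimately show ?thesis
    unfolding Lp_norm_def using assms by (simp add: powr_divide powr_powr)
qed

lemma Lp_norm_le_measure:
  fixes u :: "'a::euclidean_space \<Rightarrow> real"
  assumes [measurable]: "u \<in> borel_measurable lborel" and S_meas: "S \<in> sets lborel"
    and S_finite: "emeasure lborel S < \<infinity>" and p: "0 < p"
    and bnd: "\<And>x. \<bar>u x\<bar> \<le> Q" and supp: "\<And>x. x \<notin> S \<Longrightarrow> u x = 0"
  shows "Lp_norm p u \<le> Q * measure lborel S powr (1 / p)"
proof -
  have Q: "0 \<le> Q"
    using bnd[of 0] by linarith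
  have pw: "\<bar>u x\<bar> powr p \<le> Q powr p * indicator S x" for x
    using bnd[of x] supp[of x] p by (cases "x \<in> S") (auto intro: powr_mono2)
  have int_bound: "integrable lborel (\<lambda>x. Q powr p * indicator S x)"
    using S_meas S_finite by (intro integrable_mult_right integrable_real_indicator) auto
  have "integrable lborel (\<lambda>x. \<bar>u x\<bar> powr p)"
    by (rule Bochner_Integration.integrable_bound[OF int_bound]) (use pw in \<open>auto intro!: AE_I2\<close>)
  then have "(\<integral>x. \<bar>u x\<bar> powr p \<partial>lborel) \<le> Q powr p * measure lborel S"
    using integral_mono[OF _ int_bound pw] by simp
  then have "Lp_norm p u \<le> (Q powr p * measure lborel S) powr (1 / p)"
    unfolding Lp_norm_def using p by (intro powr_mono2) (auto simp: Bochner_Integration.integral_nonneg)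
  also have "\<dots> = Q * measure lborel S powr (1 / p)"
    using p Q by (simp add: powr_mult powr_powr)
  finally show ?thesis .
qed

lemma borel_measurable_Lp_norm_Delta:
  fixes f :: "'a::euclidean_space \<Rightarrow> real"
  assumes "continuous_on UNIV f"
  shows "(\<lambda>t. Lp_norm p (Delta (t *\<^sub>R \<xi>) f)) \<in> borel_measurable lborel"
proof -
  have [measurable]: "f \<in> borel_measurable borel"
    using assms by (rule borel_measurable_continuous_onI)
  show ?thesis
    unfolding Lp_norm_def Delta_def by measurable
qed

lemma Lp_norm_Delta_le:
  fixes f :: "'a::euclidean_space \<Rightarrow> real"
  assumes [measurable]: "f \<in> borel_measurable borel" and p: "0 < p"
    and M: "\<And>x. \<bar>f x\<bar> \<le> M" and R: "\<And>x. R < norm x \<Longrightarrow> f x = 0"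
  shows "Lp_norm p (Delta c f) \<le> 2 * M * (2 * measure lborel (cball (0::'a) R)) powr (1 / p)"
proof -
  let ?S = "cball (0::'a) R \<union> cball (- c) R"
  have "Lp_norm p (Delta c f) \<le> 2 * M * measure lborel ?S powr (1 / p)"
  proof (rule Lp_norm_le_measure)
    show "Delta c f \<in> borel_measurable lborel"
      unfolding Delta_def by measurable
    show "emeasure lborel ?S < \<infinity>"
      by (intro emeasure_bounded_finite bounded_Un[THEN iffD2] conjI bounded_cball)
    show "\<bar>Delta c f x\<bar> \<le> 2 * M" for x
      using M[of x] M[of "x + c"] unfolding Delta_def by linarith
    show "Delta c f x = 0" if "x \<notin> ?S" for x
    proof -
      have "dist (- c) x = norm (x + c)"
        by (simp add: dist_commute dist_norm)
      then have "R < norm x" "R < norm (x + c)"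
        using that by auto
      then show ?thesis
        using R unfolding Delta_def by simp
    qed
  qed (use p in simp_all)
  also have "\<dots> \<le> 2 * M * (2 * measure lborel (cball (0::'a) R)) powr (1 / p)"
  proof -
    have "measure lborel ?S \<le> measure lborel (cball (0::'a) R) + measure lborel (cball (- c) R)"
      by (rule measure_Un_le) auto
    also have "measure lborel (cball (- c) R) = measure lborel (cball (0::'a) R)"
      by (cases "0 \<le> R") (simp_all add: content_cball)
    finally have "measure lborel ?S powr (1 / p) \<le> (2 * measure lborel (cball (0::'a) R)) powr (1 / p)"
      using p by (intro powr_mono2) auto
    moreover have "0 \<le> M"
      using M[of 0] by linarith
    ultimately show ?thesis
      by (simp add: mult_left_mono)
  qed
  finally show ?thesis .
qed

lemma powr_le_max_1:
  fixes a r :: real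
  assumes "0 \<le> a" "0 \<le> r" "r \<le> 1"
  shows "a powr r \<le> max 1 a"
proof (cases "a \<le> 1")
  case True
  then show ?thesis
    using assms powr_le1 by fastforce
next
  case False
  then have "a powr r \<le> a powr 1"
    using assms by (intro powr_mono) auto
  then show ?thesis
    using False by simp
qed

lemma Lp_norm_Delta_powr_bounded:
  fixes f :: "'a::euclidean_space \<Rightarrow> real"
  assumes f: "C2c_with_gradient f g" and N: "0 < N"
  obtains C where "\<And>p c. N < p \<Longrightarrow> Lp_norm p (Delta c f) powr N \<le> C"
proof -
  obtain R where R: "\<And>x. R < norm x \<Longrightarrow> f x = 0 \<and> g x = 0"
    using C2c_with_gradient_support[OF f] by blast
  have f_cont: "continuous_on UNIV f"
    by (rule C2c_with_gradient_continuous_on[OF f])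
  obtain M where "\<forall>y\<in>range f. norm y \<le> M"
    using bounded_range_if_vanishes_outside_ball[OF f_cont] R unfolding bounded_iff by blast
  then have M: "\<bar>f x\<bar> \<le> M" for x
    by simp
  define V where "V = 2 * measure lborel (cball (0::'a) R)"
  have "Lp_norm p (Delta c f) powr N \<le> (2 * M) powr N * max 1 V" if p: "N < p" for p c
  proof -
    have "Lp_norm p (Delta c f) \<le> 2 * M * V powr (1 / p)"
      unfolding V_def using borel_measurable_continuous_onI[OF f_cont] p N M R
      by (intro Lp_norm_Delta_le) auto
    moreover have "0 \<le> M"
      using M[of 0] by linarith
    ultimately have "Lp_norm p (Delta c f) powr N \<le> (2 * M * V powr (1 / p)) powr N"
      using N by (intro powr_mono2) (auto simp: Lp_norm_def)
    also have "\<dots> = (2 * M) powr N * V powr (N / p)"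
      using \<open>0 \<le> M\<close> by (simp add: powr_mult powr_powr)
    also have "\<dots> \<le> (2 * M) powr N * max 1 V"
      using N p by (intro mult_left_mono powr_le_max_1) (auto simp: V_def)
    finally show ?thesis .
  qed
  then show thesis
    by (rule that)
qed

lemma tendsto_Lp_norm_Delta_powr_divide:
  fixes f :: "'a::euclidean_space \<Rightarrow> real" and N :: real
  assumes f: "C2c_with_gradient f g" and N: "0 < N"
  shows "((\<lambda>(p, t). Lp_norm p (Delta (t *\<^sub>R \<xi>) f) powr N / t powr N)
           \<longlongrightarrow> (\<integral>x. \<bar>g x \<bullet> \<xi>\<bar> powr N \<partial>lborel)) (at_right N \<times>\<^sub>F at_right 0)"
proof -
  let ?F = "at_right N \<times>\<^sub>F at_right (0::real)"
  define A where "A = (\<integral>x. \<bar>g x \<bullet> \<xi>\<bar> powr N \<partial>lborel)"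
  define J where "J z = (\<integral>x. \<bar>Delta (snd z *\<^sub>R \<xi>) f x / snd z\<bar> powr fst z \<partial>lborel)" for z :: "real \<times> real"
  have J_nonneg: "0 \<le> J z" for z
    unfolding J_def by (simp add: Bochner_Integration.integral_nonneg)
  have "(J \<longlongrightarrow> A) ?F"
    using tendsto_integral_Delta_divide_powr[OF f N, of \<xi>] unfolding J_def A_def case_prod_beta' .
  moreover have "(fst \<longlongrightarrow> N) ?F"
    using filterlim_fst[of "at_right N" "at_right 0"] unfolding filterlim_at by blast
  ultimately have "((\<lambda>z. J z powr (N / fst z)) \<longlongrightarrow> A powr (N / N)) ?F"
    using N J_nonneg by (intro tendsto_powr' tendsto_divide tendsto_const) auto
  moreover have "A powr (N / N) = A"
    using N by (simp add: A_def Bochner_Integration.integral_nonneg)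
  moreover have "\<forall>\<^sub>F z in ?F. J z powr (N / fst z) = Lp_norm (fst z) (Delta (snd z *\<^sub>R \<xi>) f) powr N / snd z powr N"
    using eventually_prodI[OF eventually_at_right_less eventually_at_right_less]
  proof eventually_elim
    case (elim z)
    then have p: "0 < fst z" and t: "0 < snd z"
      using N by auto
    have "J z powr (N / fst z) = Lp_norm (fst z) (\<lambda>x. Delta (snd z *\<^sub>R \<xi>) f x / snd z) powr N"
      unfolding J_def Lp_norm_powr[OF p] ..
    also have "\<dots> = (Lp_norm (fst z) (Delta (snd z *\<^sub>R \<xi>) f) / snd z) powr N"
      unfolding Lp_norm_divide[OF t p] ..
    also have "\<dots> = Lp_norm (fst z) (Delta (snd z *\<^sub>R \<xi>) f) powr N / snd z powr N"
      by (rule powr_divide)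
    finally show ?case .
  qed
  ultimately show ?thesis
    unfolding A_def case_prod_beta' by (auto elim: Lim_transform_eventually)
qed

lemma PiStar_spq_pow_nonneg: "0 \<le> PiStar_spq_pow s p q f \<xi>"
  unfolding PiStar_spq_pow_def set_lebesgue_integral_def
  by (intro Bochner_Integration.integral_nonneg) (simp add: indicator_def)

theorem tendsto_scaled_PiStar_spq_pow:
  fixes f :: "'a::euclidean_space \<Rightarrow> real" and N :: real
  assumes f: "C2c_with_gradient f g" and N: "0 < N"
  shows "((\<lambda>p. ((1 - N / p) * PiStar_spq_pow (N / p) p N f \<xi>) powr (p / N))
           \<longlongrightarrow> (1 / N) * (\<integral>x. \<bar>g x \<bullet> \<xi>\<bar> powr N \<partial>lborel)) (at_right N)"
proof -
  define A where "A = (\<integral>x. \<bar>g x \<bullet> \<xi>\<bar> powr N \<partial>lborel)"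
  have A: "0 \<le> A"
    unfolding A_def by (simp add: Bochner_Integration.integral_nonneg)
  obtain C where C: "\<And>p c. N < p \<Longrightarrow> Lp_norm p (Delta c f) powr N \<le> C"
    using Lp_norm_Delta_powr_bounded[OF f N] by blast
  have "((\<lambda>p. (1 - N / p) * PiStar_spq_pow (N / p) p N f \<xi>) \<longlongrightarrow> A / N) (at_right N)"
    unfolding PiStar_spq_pow_def A_def
  proof (rule tendsto_scaled_powr_integral[OF N])
    show "(\<lambda>t. Lp_norm p (Delta (t *\<^sub>R \<xi>) f) powr N) \<in> borel_measurable lborel" for p
      using borel_measurable_Lp_norm_Delta[OF C2c_with_gradient_continuous_on[OF f]] by measurable
    show "0 \<le> Lp_norm p (Delta (t *\<^sub>R \<xi>) f) powr N \<and> Lp_norm p (Delta (t *\<^sub>R \<xi>) f) powr N \<le> C"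
      if "N < p" for p t
      using C[OF that] by simp
  qed (rule tendsto_Lp_norm_Delta_powr_divide[OF f N])
  moreover have "\<forall>\<^sub>F p in at_right N. 0 \<le> (1 - N / p) * PiStar_spq_pow (N / p) p N f \<xi>"
    using eventually_at_right_less
    by eventually_elim (use N in \<open>simp add: PiStar_spq_pow_nonneg\<close>)
  ultimately have "((\<lambda>p. ((1 - N / p) * PiStar_spq_pow (N / p) p N f \<xi>) powr (p / N))
      \<longlongrightarrow> (A / N) powr (N / N)) (at_right N)"
    using N by (intro tendsto_powr' tendsto_divide tendsto_ident_at tendsto_const) auto
  then show ?thesis
    using N A by (simp add: A_def)
qed

theorem mainTheorem15:
  fixes f :: "real ^ 'n \<Rightarrow> real" and g :: "real ^ 'n \<Rightarrow> real ^ 'n" and \<xi> :: "real ^ 'n"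
  assumes "CARD('n) \<ge> 2"
    and "norm \<xi> = 1"
    and "C2c_with_gradient f g"
  shows "((\<lambda>p. ((1 - real CARD('n) / p) * PiStar_spq_pow (real CARD('n) / p) p (real CARD('n)) f \<xi>)
                 powr (p / real CARD('n)))
          \<longlongrightarrow> (1 / real CARD('n)) * (\<integral>x. \<bar>g x \<bullet> \<xi>\<bar> ^ CARD('n) \<partial>lborel))
         (at_right (real CARD('n)))"
  using tendsto_scaled_PiStar_spq_pow[OF assms(3), of "real CARD('n)" \<xi>]
  by (simp add: powr_realpow')

end
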